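(* Suppose Assumption 2 holds. Consider the $N$-armed system at time $t$ and suppose the OLC condition holds for the set of all $N$ arms, i.e. with $n=N$ and $z(s)=NX_t([N],s)$. If all $N$ arms take actions according to Optimal Local Control applied to $[N]$, then $$\mathbb E\big[X_{t+1}([N])-\mu^*\,\big|\,X_t\big]=(X_t([N])-\mu^* )\Phi .$$
   Context: Single-armed MDP $(\mathbb S,\mathbb A,P,r)$ with finite $\mathbb S$, $\mathbb A=\{0,1\}$, budget fraction $\alpha\in(0,1)$; in the $N$-armed system ($\alpha N$ integer) arms transition independently according to $P$ given their states and actions. $S_t(i)$ is the state of arm $i$ at time $t$; for $D\subseteq[N]$, $X_t(D)=(X_t(D,s))_s$ with $X_t(D,s)=\frac1N\#\{i\in D:S_t(i)=s\}$ (row vector). LP relaxation: maximize $\sum_{s,a}r(s,a)y(s,a)$ over $y\ge0$ subject to $\sum_sy(s,1)=\alpha$, $\sum_{s',a}y(s',a)P(s',a,s)=\sum_ay(s,a)$ for all $s$, $\sum_{s,a}y(s,a)=1$; $y^*$ is a fixed optimal solution. $\bar\pi^*(a|s)=y^*(s,a)/(y^*(s,0)+y^*(s,1))$ if the denominator is positive, else $1/2$; $P_{\bar\pi^*}(s,s')=\sum_a\bar\pi^*(a|s)P(s,a,s')$; $\mu^*(s)=y^*(s,0)+y^*(s,1)$ (row vector). Assumption 2: there is a unique state $\tilde s$ with $y^*(\tilde s,0)>0$, $y^*(\tilde s,1)>0$. $\Phi=P_{\bar\pi^*}-\mathbf 1^\top\mu^*-(c-\alpha\mathbf 1)^\top(P_1(\tilde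 s)-P_0(\tilde s))$ with $c=(\bar\pi^*(1|s))_s$, $P_a(\tilde s)=(P(\tilde s,a,s))_s$, $\mathbf 1$ the all-ones row vector. $S^+=\{s:y^*(s,1)>0,y^*(s,0)=0\}$, $S^-=\{s:y^*(s,1)=0,y^*(s,0)>0\}$, $S^\emptyset=\{s:y^*(s,1)=y^*(s,0)=0\}$. Randomized rounding of $c\ge0$: $\lceil c\rceil$ w.p. $c-\lfloor c\rfloor$, else $\lfloor c\rfloor$. Optimal Local Control (OLC) applied to a set of $n$ arms with $z(s)$ arms in state $s$, defined under the OLC condition $\sum_{s\neq\tilde s}\bar\pi^*(1|s)z(s)\le\alpha n-|S^\emptyset|-1$ and $\sum_{s\neq\tilde s}\bar\pi^*(0|s)z(s)\le(1-\alpha)n-|S^\emptyset|-1$: let $B$ be a randomized rounding of $\alpha n$; activate all arms in $S^+$, none in $S^-$, a randomized rounding of $z(s)/2$ arms in each $s\in S^\emptyset$, and arms in state $\tilde s$ so that exactly $B$ arms are active. *)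

theory Defs
  imports "HOL-Probability.Product_PMF"
begin

text \<open>Actions: False = passive (action 0), True = active (action 1).
  The single-armed kernel is P s a :: 's pmf, so P(s,a,s') = pmf (P s a) s'.\<close>

definition lp_feasible :: "('s::finite \<Rightarrow> bool \<Rightarrow> 's pmf) \<Rightarrow> real \<Rightarrow> ('s \<Rightarrow> bool \<Rightarrow> real) \<Rightarrow> bool" where
  "lp_feasible P \<alpha> y \<longleftrightarrow>
     (\<forall>s a. y s a \<ge> 0) \<and>
     (\<Sum>s\<in>UNIV. y s True) = \<alpha> \<and>
     (\<forall>s. (\<Sum>s'\<in>UNIV. \<Sum>a\<in>UNIV. y s' a * pmf (P s' a) s) = (\<Sum>a\<in>UNIV. y s a)) \<and>
     (\<Sum>s\<in>UNIV. \<Sum>a\<in>UNIV. y s a) = 1"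

definition lp_objective :: "('s::finite \<Rightarrow> bool \<Rightarrow> real) \<Rightarrow> ('s \<Rightarrow> bool \<Rightarrow> real) \<Rightarrow> real" where
  "lp_objective r y = (\<Sum>s\<in>UNIV. \<Sum>a\<in>UNIV. r s a * y s a)"

definition lp_optimal :: "('s::finite \<Rightarrow> bool \<Rightarrow> 's pmf) \<Rightarrow> ('s \<Rightarrow> bool \<Rightarrow> real) \<Rightarrow> real \<Rightarrow> ('s \<Rightarrow> bool \<Rightarrow> real) \<Rightarrow> bool" where
  "lp_optimal P r \<alpha> y \<longleftrightarrow> lp_feasible P \<alpha> y \<and>
     (\<forall>y'. lp_feasible P \<alpha> y' \<longrightarrow> lp_objective r y' \<le> lp_objective r y)"

definition pibar :: "('s \<Rightarrow> bool \<Rightarrow> real) \<Rightarrow> 's \<Rightarrow> bool \<Rightarrow> real" where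
  "pibar y s a = (if y s False + y s True > 0 then y s a / (y s False + y s True) else 1/2)"

definition Ppi :: "('s::finite \<Rightarrow> bool \<Rightarrow> 's pmf) \<Rightarrow> ('s \<Rightarrow> bool \<Rightarrow> real) \<Rightarrow> 's \<Rightarrow> 's \<Rightarrow> real" where
  "Ppi P y s s' = (\<Sum>a\<in>UNIV. pibar y s a * pmf (P s a) s')"

definition mu :: "('s \<Rightarrow> bool \<Rightarrow> real) \<Rightarrow> 's \<Rightarrow> real" where
  "mu y s = y s False + y s True"

definition Phi :: "('s::finite \<Rightarrow> bool \<Rightarrow> 's pmf) \<Rightarrow> ('s \<Rightarrow> bool \<Rightarrow> real) \<Rightarrow> real \<Rightarrow> 's \<Rightarrow> 's \<Rightarrow> 's \<Rightarrow> real" where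
  "Phi P y \<alpha> st s s' = Ppi P y s s' - mu y s'
      - (pibar y s True - \<alpha>) * (pmf (P st True) s' - pmf (P st False) s')"

definition Splus :: "('s \<Rightarrow> bool \<Rightarrow> real) \<Rightarrow> 's set" where
  "Splus y = {s. y s True > 0 \<and> y s False = 0}"
definition Sminus :: "('s \<Rightarrow> bool \<Rightarrow> real) \<Rightarrow> 's set" where
  "Sminus y = {s. y s True = 0 \<and> y s False > 0}"
definition Sempty :: "('s \<Rightarrow> bool \<Rightarrow> real) \<Rightarrow> 's set" where
  "Sempty y = {s. y s True = 0 \<and> y s False = 0}"

definition rround :: "real \<Rightarrow> nat pmf" where
  "rround c = map_pmf (\<lambda>b. if b then nat \<lceil>c\<rceil> else nat \<lfloor>c\<rfloor>) (bernoulli_pmf (c - of_int \<lfloor>c\<rfloor>))"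

text \<open>Number of arms of D in state s (i.e. z(s) = N X(D,s)), and scaled fraction X(D,s).\<close>
definition cnt :: "nat set \<Rightarrow> (nat \<Rightarrow> 's) \<Rightarrow> 's \<Rightarrow> nat" where
  "cnt D S s = card {i\<in>D. S i = s}"

definition Xfrac :: "nat \<Rightarrow> nat set \<Rightarrow> (nat \<Rightarrow> 's) \<Rightarrow> 's \<Rightarrow> real" where
  "Xfrac N D S s = real (cnt D S s) / real N"

definition olc_condition :: "('s::finite \<Rightarrow> bool \<Rightarrow> real) \<Rightarrow> real \<Rightarrow> 's \<Rightarrow> nat set \<Rightarrow> (nat \<Rightarrow> 's) \<Rightarrow> bool" where
  "olc_condition y \<alpha> st D S \<longleftrightarrow>
     (\<Sum>s\<in>UNIV - {st}. pibar y s True * real (cnt D S s))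
        \<le> \<alpha> * real (card D) - real (card (Sempty y)) - 1 \<and>
     (\<Sum>s\<in>UNIV - {st}. pibar y s False * real (cnt D S s))
        \<le> (1 - \<alpha>) * real (card D) - real (card (Sempty y)) - 1"

text \<open>Optimal Local Control applied to the arm set D, as a distribution over action
  profiles (arms outside D are reported passive).\<close>
definition olc :: "('s::finite \<Rightarrow> bool \<Rightarrow> real) \<Rightarrow> real \<Rightarrow> 's \<Rightarrow> nat set \<Rightarrow> (nat \<Rightarrow> 's) \<Rightarrow> (nat \<Rightarrow> bool) pmf" where
  "olc y \<alpha> st D S =
     bind_pmf (rround (\<alpha> * real (card D))) (\<lambda>B.
     bind_pmf (Pi_pmf (Sempty y) 0 (\<lambda>s. rround (real (cnt D S s) / 2))) (\<lambda>K.
     bind_pmf (Pi_pmf (Sempty y) {} (\<lambda>s. pmf_of_set {T. T \<subseteq> {i\<in>D. S i = s} \<and> card T = K s})) (\<lambda>T.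
     bind_pmf (pmf_of_set {U. U \<subseteq> {i\<in>D. S i = st} \<and>
                 card U = B - card {i\<in>D. S i \<in> Splus y} - (\<Sum>s\<in>Sempty y. K s)}) (\<lambda>U.
     return_pmf (\<lambda>i. i \<in> D \<and> (S i \<in> Splus y \<or> (S i \<in> Sempty y \<and> i \<in> T (S i)) \<or>
                                 (S i = st \<and> i \<in> U)))))))"

definition next_states :: "('s \<Rightarrow> bool \<Rightarrow> 's pmf) \<Rightarrow> nat \<Rightarrow> (nat \<Rightarrow> 's) \<Rightarrow> (nat \<Rightarrow> bool) \<Rightarrow> (nat \<Rightarrow> 's) pmf" where
  "next_states P N S A = Pi_pmf {..<N} undefined (\<lambda>i. P (S i) (A i))"

definition olc_step :: "('s::finite \<Rightarrow> bool \<Rightarrow> 's pmf) \<Rightarrow> ('s \<Rightarrow> bool \<Rightarrow> real) \<Rightarrow> real \<Rightarrow> 's \<Rightarrow> nat \<Rightarrow> (nat \<Rightarrow> 's) \<Rightarrow> (nat \<Rightarrow> 's) pmf" where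
  "olc_step P y \<alpha> st N S = bind_pmf (olc y \<alpha> st {..<N} S) (next_states P N S)"

end

theory Submission
  imports Defs
begin

text \<open>Conditionally on the current states, each arm moves independently, so the expected
  fraction of arms in s' after one step is linear in the numbers a(s) of arms activated in each
  state s: it equals (1/N) \<Sum>s z(s) P(s,0,s') + a(s) (P(s,1,s') - P(s,0,s')).
  Under OLC, a(s) is z(s) on S+, 0 on S- and a randomized rounding of z(s)/2 on the empty states,
  so E a(s) = c(s) z(s) for every s other than st; the slack in the OLC condition absorbs the
  rounding errors, so the arms in state st can always fill the remaining budget exactly and
  a(st) = \<alpha> N - \<Sum>s\<noteq>st a(s). Substituting these means, the LP constraints
  (\<Sum> \<mu>* = 1, \<Sum> \<mu>* c = \<alpha>, \<mu>* P_pibar = \<mu>*) turn the result into (X - \<mu>*) \<Phi>.\<close>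

lemma expectation_bind_pmf_bounded:
  fixes g :: "'b \<Rightarrow> real"
  assumes "\<And>x. \<bar>g x\<bar> \<le> c"
  shows "measure_pmf.expectation (bind_pmf M f) g
       = measure_pmf.expectation M (\<lambda>x. measure_pmf.expectation (f x) g)"
  unfolding measure_pmf_bind
  by (rule integral_bind[where K="count_space UNIV" and B=c and B'=1])
     (auto simp: assms measure_pmf_in_subprob_algebra measure_pmf.prob_space_axioms
        prob_space.finite_measure intro!: measure_pmf.emeasure_le_1)

lemma expectation_const_on_set_pmf:
  fixes f :: "'a \<Rightarrow> real"
  assumes "\<And>x. x \<in> set_pmf M \<Longrightarrow> f x = c"
  shows "measure_pmf.expectation M f = c"
proof -
  have "measure_pmf.expectation M f = measure_pmf.expectation M (\<lambda>_. c)"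
    by (intro integral_cong_AE) (auto simp: AE_measure_pmf_iff assms)
  then show ?thesis by simp
qed

lemma integrable_bounded_on_set_pmf:
  fixes f :: "'a \<Rightarrow> real"
  assumes "\<And>x. x \<in> set_pmf M \<Longrightarrow> \<bar>f x\<bar> \<le> c"
  shows "integrable (measure_pmf M) f"
  using assms by (intro measure_pmf.integrable_const_bound[where B=c]) (auto simp: AE_measure_pmf_iff)

lemma expectation_Pi_pmf_component:
  fixes f :: "'b \<Rightarrow> real"
  assumes "finite A" "s \<in> A"
  shows "measure_pmf.expectation (Pi_pmf A d p) (\<lambda>K. f (K s)) = measure_pmf.expectation (p s) f"
proof -
  have "map_pmf (\<lambda>K. K s) (Pi_pmf A d p) = p s"
    using assms by (simp add: Pi_pmf_component)
  then show ?thesis by (metis integral_map_pmf)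
qed

lemma set_pmf_of_set_subsets_card:
  assumes "finite X" "k \<le> card X"
  shows "set_pmf (pmf_of_set {T. T \<subseteq> X \<and> card T = k}) = {T. T \<subseteq> X \<and> card T = k}"
proof -
  obtain T where "T \<subseteq> X" "card T = k"
    using obtain_subset_with_card_n[OF assms(2)] by metis
  then have "{T. T \<subseteq> X \<and> card T = k} \<noteq> {}" by auto
  then show ?thesis using assms(1) by simp
qed

lemma rround_of_nat: "rround (real m) = return_pmf m"
proof -
  have int: "nat \<lceil>real m\<rceil> = m" "nat \<lfloor>real m\<rfloor> = m" by simp_all
  show ?thesis unfolding rround_def int by (simp add: map_pmf_const)
qed

lemma set_pmf_rround: "x \<in> set_pmf (rround c) \<Longrightarrow> x = nat \<lfloor>c\<rfloor> \<or> x = nat \<lceil>c\<rceil>"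
  unfolding rround_def by auto

lemma expectation_rround:
  assumes "0 \<le> c"
  shows "measure_pmf.expectation (rround c) real = c"
proof -
  have frac: "0 \<le> c - of_int \<lfloor>c\<rfloor>" "c - of_int \<lfloor>c\<rfloor> \<le> 1" by linarith+
  have "measure_pmf.expectation (rround c) real
      = real (nat \<lceil>c\<rceil>) * (c - of_int \<lfloor>c\<rfloor>) + real (nat \<lfloor>c\<rfloor>) * (1 - (c - of_int \<lfloor>c\<rfloor>))"
    unfolding rround_def using frac by simp
  also have "\<dots> = c"
  proof (cases "c = of_int \<lfloor>c\<rfloor>")
    case True
    moreover have "real (nat \<lfloor>c\<rfloor>) = of_int \<lfloor>c\<rfloor>" using assms by simp
    ultimately show ?thesis by simp
  next
    case False
    then have "\<lceil>c\<rceil> = \<lfloor>c\<rfloor> + 1" by (metis ceiling_altdef)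
    then show ?thesis using assms by (simp add: algebra_simps)
  qed
  finally show ?thesis .
qed

lemma rround_half_bounds:
  assumes "K \<in> set_pmf (rround (real n / 2))"
  shows "\<bar>real K - real n / 2\<bar> \<le> 1/2" "K \<le> n"
proof -
  obtain k where k: "n = 2*k \<or> n = 2*k + 1"
    by (metis odd_two_times_div_two_succ dvd_mult_div_cancel evenE)
  then have "K = k \<or> K = k + 1 \<and> n = 2*k + 1"
  proof
    assume "n = 2*k"
    then have "real n / 2 = real k" by simp
    then show ?thesis using set_pmf_rround[OF assms] by simp
  next
    assume n: "n = 2*k + 1"
    then have half: "real n / 2 = real k + 1/2" by simp
    have "\<lfloor>real n / 2\<rfloor> = int k" unfolding half by (rule floor_unique) auto
    moreover have "\<lceil>real n / 2\<rceil> = int k + 1" unfolding half by (rule ceiling_unique) auto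
    ultimately show ?thesis using set_pmf_rround[OF assms] n by auto
  qed
  then show "\<bar>real K - real n / 2\<bar> \<le> 1/2" "K \<le> n"
    using k by (auto simp: field_simps)
qed

definition active_cnt :: "nat set \<Rightarrow> (nat \<Rightarrow> 's) \<Rightarrow> (nat \<Rightarrow> bool) \<Rightarrow> 's \<Rightarrow> nat" where
  "active_cnt D S A s = card {i\<in>D. S i = s \<and> A i}"

lemma card_state_in:
  fixes S :: "nat \<Rightarrow> 's::finite"
  assumes "finite D"
  shows "card {i\<in>D. S i \<in> X} = (\<Sum>s\<in>X. cnt D S s)"
proof -
  have "card {i\<in>D. S i \<in> X} = (\<Sum>i\<in>{i\<in>D. S i \<in> X}. 1)" by simp
  also have "\<dots> = (\<Sum>s\<in>X. \<Sum>i\<in>{i\<in>{i\<in>D. S i \<in> X}. S i = s}. 1)"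
    using assms by (intro sum.group[symmetric]) auto
  also have "\<dots> = (\<Sum>s\<in>X. cnt D S s)"
    unfolding cnt_def by (intro sum.cong) (auto intro!: arg_cong[where f=card])
  finally show ?thesis .
qed

lemma sum_cnt: "finite D \<Longrightarrow> (\<Sum>s\<in>UNIV. real (cnt D S (s::'s::finite))) = real (card D)"
  using card_state_in[of D S UNIV] by (simp flip: of_nat_sum)

lemma sum_arms_by_state:
  fixes S :: "nat \<Rightarrow> 's::finite" and f :: "'s \<Rightarrow> bool \<Rightarrow> real"
  assumes "finite D"
  shows "(\<Sum>i\<in>D. f (S i) (A i))
       = (\<Sum>s\<in>UNIV. real (cnt D S s) * f s False + real (active_cnt D S A s) * (f s True - f s False))"
proof -
  have "(\<Sum>i\<in>D. f (S i) (A i)) = (\<Sum>s\<in>UNIV. \<Sum>i\<in>{i\<in>D. S i = s}. f (S i) (A i))"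
    using assms by (rule sum.group[symmetric]) auto
  also have "\<dots> = (\<Sum>s\<in>UNIV. real (cnt D S s) * f s False + real (active_cnt D S A s) * (f s True - f s False))"
  proof (rule sum.cong[OF refl])
    fix s
    have "(\<Sum>i\<in>{i\<in>D. S i = s}. f (S i) (A i))
        = (\<Sum>i\<in>{i\<in>D. S i = s}. f s False + (if A i then f s True - f s False else 0))"
      by (intro sum.cong) auto
    also have "\<dots> = real (cnt D S s) * f s False
        + (\<Sum>i\<in>{i\<in>D. S i = s}. if A i then f s True - f s False else 0)"
      by (simp add: sum.distrib cnt_def)
    also have "(\<Sum>i\<in>{i\<in>D. S i = s}. if A i then f s True - f s False else 0)
        = (\<Sum>i\<in>{i\<in>D. S i = s \<and> A i}. f s True - f s False)"
      using assms by (intro sum.mono_neutral_cong_right) auto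
    finally show "(\<Sum>i\<in>{i\<in>D. S i = s}. f (S i) (A i))
        = real (cnt D S s) * f s False + real (active_cnt D S A s) * (f s True - f s False)"
      by (simp add: active_cnt_def)
  qed
  finally show ?thesis .
qed

lemma expectation_Xfrac_next_states:
  fixes P :: "'s::finite \<Rightarrow> bool \<Rightarrow> 's pmf"
  shows "measure_pmf.expectation (next_states P N S A) (\<lambda>S'. Xfrac N {..<N} S' s')
       = (\<Sum>i<N. pmf (P (S i) (A i)) s') / real N"
proof -
  define ind where "ind v = (if v = s' then 1 else 0::real)" for v
  have X: "Xfrac N {..<N} S' s' = (\<Sum>i<N. ind (S' i)) / real N" for S'
    unfolding Xfrac_def cnt_def ind_def by (simp add: sum.If_cases Int_def)
  have "measure_pmf.expectation (next_states P N S A) (\<lambda>S'. ind (S' i)) = pmf (P (S i) (A i)) s'"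
    if "i < N" for i
  proof -
    have "measure_pmf.expectation (next_states P N S A) (\<lambda>S'. ind (S' i))
        = measure_pmf.expectation (P (S i) (A i)) ind"
      unfolding next_states_def using that by (simp add: expectation_Pi_pmf_component)
    also have "\<dots> = pmf (P (S i) (A i)) s'"
      unfolding ind_def by (subst integral_measure_pmf_real[of "{s'}"]) (auto split: if_splits)
    finally show ?thesis .
  qed
  moreover have "integrable (measure_pmf (next_states P N S A)) (\<lambda>S'. ind (S' i))" for i
    by (rule integrable_bounded_on_set_pmf[where c=1]) (simp add: ind_def)
  ultimately show ?thesis
    unfolding X by (simp add: Bochner_Integration.integral_sum)
qed

lemma expectation_Xfrac_after_actions:
  fixes P :: "'s::finite \<Rightarrow> bool \<Rightarrow> 's pmf" and Act :: "(nat \<Rightarrow> bool) pmf"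
  shows "measure_pmf.expectation (bind_pmf Act (next_states P N S)) (\<lambda>S'. Xfrac N {..<N} S' s')
       = (\<Sum>s\<in>UNIV. real (cnt {..<N} S s) * pmf (P s False) s'
            + measure_pmf.expectation Act (\<lambda>A. real (active_cnt {..<N} S A s))
                * (pmf (P s True) s' - pmf (P s False) s')) / real N"
proof -
  have Xfrac_le: "\<bar>Xfrac N {..<N} S' s'\<bar> \<le> 1" for S'
    using card_mono[of "{..<N}" "{i\<in>{..<N}. S' i = s'}"]
    by (cases "N = 0") (auto simp: Xfrac_def cnt_def)
  have active_le: "\<bar>real (active_cnt {..<N} S A s)\<bar> \<le> N" for A s
    using card_mono[of "{..<N}" "{i\<in>{..<N}. S i = s \<and> A i}"] by (auto simp: active_cnt_def)
  have active_integrable: "integrable (measure_pmf Act) (\<lambda>A. real (active_cnt {..<N} S A s))" for s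
    by (rule integrable_bounded_on_set_pmf) (rule active_le)
  have "measure_pmf.expectation (bind_pmf Act (next_states P N S)) (\<lambda>S'. Xfrac N {..<N} S' s')
      = measure_pmf.expectation Act (\<lambda>A. (\<Sum>s\<in>UNIV. real (cnt {..<N} S s) * pmf (P s False) s'
            + real (active_cnt {..<N} S A s) * (pmf (P s True) s' - pmf (P s False) s')) / real N)"
    by (simp add: expectation_bind_pmf_bounded[OF Xfrac_le] expectation_Xfrac_next_states
        sum_arms_by_state[where f="\<lambda>s a. pmf (P s a) s'", symmetric])
  then show ?thesis
    by (simp add: Bochner_Integration.integral_sum active_integrable)
qed

lemma pibar_False: "pibar y s False = 1 - pibar y s True"
  by (cases "0 < y s False + y s True") (simp_all add: pibar_def field_simps)

lemma Sempty_notin_Splus: "s \<in> Sempty y \<Longrightarrow> s \<notin> Splus y"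
  by (simp add: Sempty_def Splus_def)

lemma mu_mul_pibar:
  assumes "\<And>a. 0 \<le> y s a"
  shows "mu y s * pibar y s a = y s a"
proof (cases "0 < y s False + y s True")
  case False
  then have "y s False = 0" "y s True = 0"
    using assms[of False] assms[of True] by linarith+
  then show ?thesis by (cases a) (simp_all add: mu_def pibar_def)
qed (simp add: mu_def pibar_def)

lemma Ppi_eq:
  "Ppi P y s s' = pmf (P s False) s' + pibar y s True * (pmf (P s True) s' - pmf (P s False) s')"
  by (simp add: Ppi_def UNIV_bool pibar_False algebra_simps)

lemma lp_feasible_nonneg: "lp_feasible P \<alpha> y \<Longrightarrow> 0 \<le> y s a"
  by (simp add: lp_feasible_def)

lemma lp_feasible_sum_mu: "lp_feasible P \<alpha> y \<Longrightarrow> (\<Sum>s\<in>UNIV. mu y s) = 1"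
  by (simp add: lp_feasible_def mu_def UNIV_bool)

lemma lp_feasible_sum_mu_pibar:
  "lp_feasible P \<alpha> y \<Longrightarrow> (\<Sum>s\<in>UNIV. mu y s * pibar y s True) = \<alpha>"
  by (simp add: mu_mul_pibar lp_feasible_nonneg) (simp add: lp_feasible_def)

lemma lp_feasible_sum_mu_Ppi:
  assumes "lp_feasible P \<alpha> y"
  shows "(\<Sum>s\<in>UNIV. mu y s * Ppi P y s s') = mu y s'"
proof -
  have "(\<Sum>s\<in>UNIV. mu y s * Ppi P y s s') = (\<Sum>s\<in>UNIV. \<Sum>a\<in>UNIV. y s a * pmf (P s a) s')"
    unfolding Ppi_def sum_distrib_left
    by (simp add: mult.assoc[symmetric] mu_mul_pibar lp_feasible_nonneg[OF assms])
  also have "\<dots> = (\<Sum>a\<in>UNIV. y s' a)"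
    using assms by (simp add: lp_feasible_def)
  finally show ?thesis by (simp add: mu_def UNIV_bool)
qed

text \<open>Stationarity of mu under Ppi, the budget and the normalisation of y make all mu-terms
  cancel.\<close>
lemma sum_deviation_mul_Phi:
  assumes "lp_feasible P \<alpha> y" "(\<Sum>s\<in>UNIV. X s) = 1"
  shows "(\<Sum>s\<in>UNIV. (X s - mu y s) * Phi P y \<alpha> st s s')
       = (\<Sum>s\<in>UNIV. X s * Ppi P y s s')
         - (pmf (P st True) s' - pmf (P st False) s') * (\<Sum>s\<in>UNIV. X s * (pibar y s True - \<alpha>))
         - mu y s'"
proof -
  define d where "d = pmf (P st True) s' - pmf (P st False) s'"
  have "(\<Sum>s\<in>UNIV. (X s - mu y s) * Phi P y \<alpha> st s s')
      = (\<Sum>s\<in>UNIV. X s * Ppi P y s s') - mu y s' * (\<Sum>s\<in>UNIV. X s)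
        - d * (\<Sum>s\<in>UNIV. X s * (pibar y s True - \<alpha>))
        - (\<Sum>s\<in>UNIV. mu y s * Ppi P y s s') + mu y s' * (\<Sum>s\<in>UNIV. mu y s)
        + d * ((\<Sum>s\<in>UNIV. mu y s * pibar y s True) - \<alpha> * (\<Sum>s\<in>UNIV. mu y s))"
    unfolding Phi_def d_def
    by (simp add: algebra_simps sum.distrib sum_subtractf sum_distrib_left)
  then show ?thesis
    using assms by (simp add: d_def lp_feasible_sum_mu lp_feasible_sum_mu_pibar lp_feasible_sum_mu_Ppi)
qed

locale olc_instance =
  fixes y :: "'s::finite \<Rightarrow> bool \<Rightarrow> real" and \<alpha> :: real and st :: 's
    and D :: "nat set" and S :: "nat \<Rightarrow> 's" and m :: nat
  assumes y_nonneg: "\<And>s a. 0 \<le> y s a"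
    and st_mixed: "0 < y st False" "0 < y st True"
    and mixed_unique: "\<And>s. 0 < y s False \<Longrightarrow> 0 < y s True \<Longrightarrow> s = st"
    and finite_D: "finite D"
    and budget: "\<alpha> * real (card D) = real m"
    and condition: "olc_condition y \<alpha> st D S"
begin

definition rounding :: "('s \<Rightarrow> nat) pmf" where
  "rounding = Pi_pmf (Sempty y) 0 (\<lambda>s. rround (real (cnt D S s) / 2))"

definition planned :: "('s \<Rightarrow> nat) \<Rightarrow> 's \<Rightarrow> nat" where
  "planned K s = (if s \<in> Splus y then cnt D S s else if s \<in> Sempty y then K s else 0)"

definition olc_given_rounding :: "('s \<Rightarrow> nat) \<Rightarrow> (nat \<Rightarrow> bool) pmf" where
  "olc_given_rounding K =
     bind_pmf (Pi_pmf (Sempty y) {} (\<lambda>s. pmf_of_set {T. T \<subseteq> {i\<in>D. S i = s} \<and> card T = K s})) (\<lambda>T.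
     bind_pmf (pmf_of_set {U. U \<subseteq> {i\<in>D. S i = st} \<and>
                 card U = m - card {i\<in>D. S i \<in> Splus y} - (\<Sum>s\<in>Sempty y. K s)}) (\<lambda>U.
     return_pmf (\<lambda>i. i \<in> D \<and> (S i \<in> Splus y \<or> (S i \<in> Sempty y \<and> i \<in> T (S i)) \<or>
                                 (S i = st \<and> i \<in> U)))))"

text \<open>The budget m = \<alpha> |D| is an integer, so its randomized rounding is deterministic.\<close>
lemma olc_eq_bind_rounding: "olc y \<alpha> st D S = bind_pmf rounding olc_given_rounding"
  unfolding olc_def rounding_def olc_given_rounding_def budget by (simp add: rround_of_nat bind_return_pmf)

lemma off_st_cases:
  assumes "s \<noteq> st"
  obtains "s \<in> Splus y" "s \<notin> Sempty y" "pibar y s True = 1"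
    | "s \<in> Sempty y" "s \<notin> Splus y" "pibar y s True = 1/2"
    | "s \<notin> Splus y" "s \<notin> Sempty y" "pibar y s True = 0"
proof -
  have "\<not> (0 < y s False \<and> 0 < y s True)" using mixed_unique assms by blast
  then consider "y s False = 0" "0 < y s True" | "0 < y s False" "y s True = 0"
    | "y s False = 0" "y s True = 0"
    using y_nonneg[of s False] y_nonneg[of s True] by linarith
  then show ?thesis
    by cases (use that in \<open>auto simp: Splus_def Sempty_def pibar_def\<close>)
qed

lemma st_notin: "st \<notin> Splus y" "st \<notin> Sempty y"
  using st_mixed by (auto simp: Splus_def Sempty_def)

lemma rounding_component:
  "K \<in> set_pmf rounding \<Longrightarrow> s \<in> Sempty y \<Longrightarrow> K s \<in> set_pmf (rround (real (cnt D S s) / 2))"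
  unfolding rounding_def set_Pi_pmf[OF finite] PiE_dflt_def by auto

lemma planned_le_cnt: "K \<in> set_pmf rounding \<Longrightarrow> planned K s \<le> cnt D S s"
  using rround_half_bounds(2)[OF rounding_component] by (simp add: planned_def)

lemma sum_planned:
  "(\<Sum>s\<in>UNIV - {st}. planned K s) = card {i\<in>D. S i \<in> Splus y} + (\<Sum>s\<in>Sempty y. K s)"
proof -
  have "(\<Sum>s\<in>UNIV - {st}. planned K s)
      = (\<Sum>s\<in>UNIV - {st}. (if s \<in> Splus y then cnt D S s else 0) + (if s \<in> Sempty y then K s else 0))"
    unfolding planned_def by (intro sum.cong) (auto dest: Sempty_notin_Splus)
  also have "\<dots> = (\<Sum>s\<in>Splus y. cnt D S s) + (\<Sum>s\<in>Sempty y. K s)"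
    using st_notin by (simp add: sum.distrib sum.If_cases Int_absorb1 subset_Diff_insert)
  finally show ?thesis by (simp add: card_state_in[OF finite_D])
qed

lemma planned_near_mean:
  assumes "K \<in> set_pmf rounding" "s \<noteq> st"
  shows "\<bar>real (planned K s) - pibar y s True * real (cnt D S s)\<bar> \<le> (if s \<in> Sempty y then 1/2 else 0)"
  using assms(2)
proof (cases rule: off_st_cases)
  case 2
  then show ?thesis
    unfolding 2(3) using rround_half_bounds(1)[OF rounding_component[OF assms(1)]]
    by (simp add: planned_def)
qed (simp_all add: planned_def)

lemma sum_planned_near_mean:
  assumes "K \<in> set_pmf rounding"
  shows "\<bar>(\<Sum>s\<in>UNIV - {st}. real (planned K s)) - (\<Sum>s\<in>UNIV - {st}. pibar y s True * real (cnt D S s))\<bar>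
       \<le> real (card (Sempty y)) / 2"
proof -
  have "\<bar>\<Sum>s\<in>UNIV - {st}. real (planned K s) - pibar y s True * real (cnt D S s)\<bar>
      \<le> (\<Sum>s\<in>UNIV - {st}. if s \<in> Sempty y then 1/2 else 0)"
    by (rule order.trans[OF sum_abs]) (intro sum_mono planned_near_mean[OF assms], auto)
  also have "\<dots> = real (card (Sempty y)) / 2"
    using st_notin by (simp add: sum.If_cases Int_absorb1 subset_Diff_insert)
  finally show ?thesis by (simp add: sum_subtractf)
qed

text \<open>The two slack terms of the OLC condition absorb the rounding errors in the states of
  Sempty, so the remaining budget can always be filled from the arms in state st.\<close>
lemma planned_within_budget:
  assumes "K \<in> set_pmf rounding"
  shows "(\<Sum>s\<in>UNIV - {st}. planned K s) \<le> m" "m \<le> (\<Sum>s\<in>UNIV - {st}. planned K s) + cnt D S st"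
proof -
  have "(\<Sum>s\<in>UNIV - {st}. real (cnt D S s)) = real (card D) - real (cnt D S st)"
    using sum.remove[of UNIV st "\<lambda>s. real (cnt D S s)"] sum_cnt[OF finite_D, of S] by simp
  then have "(\<Sum>s\<in>UNIV - {st}. pibar y s False * real (cnt D S s))
      = real (card D) - real (cnt D S st) - (\<Sum>s\<in>UNIV - {st}. pibar y s True * real (cnt D S s))"
    by (simp add: pibar_False left_diff_distrib sum_subtractf)
  then have "real (\<Sum>s\<in>UNIV - {st}. planned K s) \<le> real m"
    "real m \<le> real (\<Sum>s\<in>UNIV - {st}. planned K s) + real (cnt D S st)"
    using condition sum_planned_near_mean[OF assms] budget
    unfolding olc_condition_def abs_le_iff by (simp_all add: algebra_simps)
  then show "(\<Sum>s\<in>UNIV - {st}. planned K s) \<le> m" "m \<le> (\<Sum>s\<in>UNIV - {st}. planned K s) + cnt D S st"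
    by (simp_all only: of_nat_add[symmetric] of_nat_le_iff)
qed

lemma active_cnt_olc_given_rounding:
  assumes K: "K \<in> set_pmf rounding" and A: "A \<in> set_pmf (olc_given_rounding K)"
  shows "active_cnt D S A s = (if s = st then m - (\<Sum>u\<in>UNIV - {st}. planned K u) else planned K s)"
proof -
  obtain T U where T: "T \<in> set_pmf (Pi_pmf (Sempty y) {} (\<lambda>s. pmf_of_set {T. T \<subseteq> {i\<in>D. S i = s} \<and> card T = K s}))"
    and U: "U \<in> set_pmf (pmf_of_set {U. U \<subseteq> {i\<in>D. S i = st} \<and>
                 card U = m - card {i\<in>D. S i \<in> Splus y} - (\<Sum>s\<in>Sempty y. K s)})"
    and A_eq: "A = (\<lambda>i. i \<in> D \<and> (S i \<in> Splus y \<or> (S i \<in> Sempty y \<and> i \<in> T (S i)) \<or> (S i = st \<and> i \<in> U)))"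
    using A by (auto simp: olc_given_rounding_def)
  have T_s: "T s \<subseteq> {i\<in>D. S i = s} \<and> card (T s) = K s" if "s \<in> Sempty y" for s
  proof -
    have "T s \<in> set_pmf (pmf_of_set {T. T \<subseteq> {i\<in>D. S i = s} \<and> card T = K s})"
      using T that unfolding set_Pi_pmf[OF finite] PiE_dflt_def by auto
    then show ?thesis
      using planned_le_cnt[OF K, of s] that finite_D
      by (subst (asm) set_pmf_of_set_subsets_card) (auto simp: planned_def cnt_def Sempty_notin_Splus)
  qed
  have "m - card {i\<in>D. S i \<in> Splus y} - (\<Sum>s\<in>Sempty y. K s) \<le> card {i\<in>D. S i = st}"
    using planned_within_budget[OF K] unfolding sum_planned cnt_def by linarith
  then have U_st: "U \<subseteq> {i\<in>D. S i = st} \<and> card U = m - (\<Sum>u\<in>UNIV - {st}. planned K u)"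
    using U finite_D unfolding sum_planned by (subst (asm) set_pmf_of_set_subsets_card) auto
  show ?thesis
  proof (cases "s = st")
    case True
    then have "{i\<in>D. S i = s \<and> A i} = U" using U_st st_notin by (auto simp: A_eq)
    then show ?thesis using True U_st by (simp add: active_cnt_def)
  next
    case False
    then show ?thesis
    proof (cases rule: off_st_cases)
      case 1
      then have "{i\<in>D. S i = s \<and> A i} = {i\<in>D. S i = s}" by (auto simp: A_eq)
      then show ?thesis using 1 False by (simp add: active_cnt_def planned_def cnt_def)
    next
      case 2
      then have "{i\<in>D. S i = s \<and> A i} = T s" using False T_s[of s] by (auto simp: A_eq)
      then show ?thesis using 2 False T_s[of s] by (simp add: active_cnt_def planned_def)
    next
      case 3
      then have "{i\<in>D. S i = s \<and> A i} = {}" using False by (auto simp: A_eq)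
      then have "active_cnt D S A s = 0" by (simp only: active_cnt_def card.empty)
      then show ?thesis using 3 False by (simp add: planned_def)
    qed
  qed
qed

lemma integrable_planned: "integrable (measure_pmf rounding) (\<lambda>K. real (planned K s))"
  by (rule integrable_bounded_on_set_pmf[where c="cnt D S s"]) (simp add: planned_le_cnt)

lemma expectation_planned:
  assumes "s \<noteq> st"
  shows "measure_pmf.expectation rounding (\<lambda>K. real (planned K s)) = pibar y s True * real (cnt D S s)"
  using assms
proof (cases rule: off_st_cases)
  case 2
  have "measure_pmf.expectation rounding (\<lambda>K. real (planned K s))
      = measure_pmf.expectation rounding (\<lambda>K. real (K s))"
    using 2 by (simp add: planned_def)
  also have "\<dots> = real (cnt D S s) / 2"
    using 2 by (simp add: rounding_def expectation_Pi_pmf_component expectation_rround)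
  finally show ?thesis unfolding 2(3) by simp
qed (simp_all add: planned_def)

lemma expectation_active_cnt_olc:
  "measure_pmf.expectation (olc y \<alpha> st D S) (\<lambda>A. real (active_cnt D S A s))
     = pibar y s True * real (cnt D S s)
       + (if s = st then real m - (\<Sum>u\<in>UNIV. pibar y u True * real (cnt D S u)) else 0)"
proof -
  have active_le: "\<bar>real (active_cnt D S A s)\<bar> \<le> card D" for A
    using card_mono[OF finite_D, of "{i\<in>D. S i = s \<and> A i}"] by (auto simp: active_cnt_def)
  have "measure_pmf.expectation (olc y \<alpha> st D S) (\<lambda>A. real (active_cnt D S A s))
      = measure_pmf.expectation rounding
          (\<lambda>K. if s = st then real m - (\<Sum>u\<in>UNIV - {st}. real (planned K u)) else real (planned K s))"
    unfolding olc_eq_bind_rounding expectation_bind_pmf_bounded[OF active_le]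
    by (intro integral_cong_AE)
       (auto simp: AE_measure_pmf_iff active_cnt_olc_given_rounding planned_within_budget of_nat_diff
          intro!: expectation_const_on_set_pmf)
  also have "\<dots> = pibar y s True * real (cnt D S s)
       + (if s = st then real m - (\<Sum>u\<in>UNIV. pibar y u True * real (cnt D S u)) else 0)"
  proof (cases "s = st")
    case True
    then show ?thesis
      using sum.remove[of UNIV st "\<lambda>u. pibar y u True * real (cnt D S u)"]
      by (simp add: Bochner_Integration.integral_sum integrable_planned expectation_planned)
  qed (simp add: expectation_planned)
  finally show ?thesis .
qed

lemma card_D_pos: "0 < card D"
proof (rule ccontr)
  assume "\<not> 0 < card D"
  then have "D = {}" using finite_D by simp
  then show False using condition by (simp add: olc_condition_def cnt_def)
qed

lemma expectation_Xfrac_olc_step: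
  fixes P :: "'s \<Rightarrow> bool \<Rightarrow> 's pmf"
  assumes D: "D = {..<N}"
  shows "measure_pmf.expectation (olc_step P y \<alpha> st N S) (\<lambda>S'. Xfrac N {..<N} S' s')
       = (\<Sum>s\<in>UNIV. Xfrac N {..<N} S s * Ppi P y s s')
         - (pmf (P st True) s' - pmf (P st False) s') * (\<Sum>s\<in>UNIV. Xfrac N {..<N} S s * (pibar y s True - \<alpha>))"
proof -
  define z where "z s = real (cnt D S s)" for s
  define d where "d s = pmf (P s True) s' - pmf (P s False) s'" for s
  have N: "card D = N" "0 < N" using card_D_pos by (simp_all add: D)
  have sum_z: "(\<Sum>s\<in>UNIV. z s) = N"
    unfolding z_def using sum_cnt[OF finite_D, of S] N(1) by simp
  have Ppi_sum: "(\<Sum>s\<in>UNIV. z s / N * Ppi P y s s')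
      = (\<Sum>s\<in>UNIV. z s * pmf (P s False) s' + pibar y s True * z s * d s) / N"
    unfolding sum_divide_distrib by (rule sum.cong) (auto simp: Ppi_eq d_def field_simps)
  have deviation_sum:
    "(\<Sum>s\<in>UNIV. z s / N * (pibar y s True - \<alpha>)) = (\<Sum>u\<in>UNIV. pibar y u True * z u) / N - \<alpha>"
    using sum_z N by (simp add: right_diff_distrib sum_subtractf sum_divide_distrib[symmetric]
        sum_distrib_left[symmetric] mult.commute)
  have budget_fraction: "real m / N = \<alpha>" using budget N by (simp add: field_simps)
  have "measure_pmf.expectation (olc_step P y \<alpha> st N S) (\<lambda>S'. Xfrac N {..<N} S' s')
      = (\<Sum>s\<in>UNIV. z s * pmf (P s False) s' + pibar y s True * z s * d s) / N
        + d st * (real m - (\<Sum>u\<in>UNIV. pibar y u True * z u)) / N"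
    unfolding olc_step_def expectation_Xfrac_after_actions unfolding D[symmetric] expectation_active_cnt_olc
    by (simp add: z_def d_def distrib_right sum.distrib add_divide_distrib sum.delta
        if_distrib[of "\<lambda>x. x * _"] cong: if_cong)
  also have "\<dots> = (\<Sum>s\<in>UNIV. z s / N * Ppi P y s s') - d st * (\<Sum>s\<in>UNIV. z s / N * (pibar y s True - \<alpha>))"
    using budget_fraction unfolding Ppi_sum deviation_sum
    by (simp add: diff_divide_distrib right_diff_distrib flip: times_divide_eq_right)
  finally show ?thesis by (simp add: z_def d_def D Xfrac_def)
qed

end

theorem lemma1:
  fixes P :: "'s::finite \<Rightarrow> bool \<Rightarrow> 's pmf"
    and r :: "'s \<Rightarrow> bool \<Rightarrow> real"
    and \<alpha> :: real
    and y :: "'s \<Rightarrow> bool \<Rightarrow> real"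
    and st :: 's
    and N :: nat
    and S :: "nat \<Rightarrow> 's"
  assumes "0 < \<alpha>" and "\<alpha> < 1"
    and "\<alpha> * real N \<in> \<nat>"
    and "lp_optimal P r \<alpha> y"
    and "y st False > 0" and "y st True > 0"
    and "\<And>s. y s False > 0 \<Longrightarrow> y s True > 0 \<Longrightarrow> s = st"
    and "olc_condition y \<alpha> st {..<N} S"
  shows "\<forall>s'. measure_pmf.expectation (olc_step P y \<alpha> st N S) (\<lambda>S'. Xfrac N {..<N} S' s') - mu y s'
           = (\<Sum>s\<in>UNIV. (Xfrac N {..<N} S s - mu y s) * Phi P y \<alpha> st s s')"
proof
  fix s'
  obtain m where m: "\<alpha> * real N = real m" using assms(3) Nats_cases by metis
  have feasible: "lp_feasible P \<alpha> y" using assms(4) by (simp add: lp_optimal_def)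
  interpret olc_instance y \<alpha> st "{..<N}" S m
    by unfold_locales (auto simp: m assms(5,6,8) lp_feasible_nonneg[OF feasible] intro: assms(7))
  have "(\<Sum>s\<in>UNIV. Xfrac N {..<N} S s) = 1"
    using card_D_pos sum_cnt[of "{..<N}" S] by (simp add: Xfrac_def flip: sum_divide_distrib)
  then show "measure_pmf.expectation (olc_step P y \<alpha> st N S) (\<lambda>S'. Xfrac N {..<N} S' s') - mu y s'
           = (\<Sum>s\<in>UNIV. (Xfrac N {..<N} S s - mu y s) * Phi P y \<alpha> st s s')"
    by (simp only: sum_deviation_mul_Phi[OF feasible] expectation_Xfrac_olc_step[OF refl])
qed

end
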